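(* Let $A$ be a finite set and let $\rho\subseteq A^n$, $n\ge3$, be an essential key relation preserved by a semilattice operation or by a 2-semilattice operation on $A$. Then the pattern of $\rho$ is either the trivial equivalence relation, or an equivalence relation in which exactly one class has two elements and all other classes are singletons.
   Context: A semilattice operation is a binary associative, commutative, idempotent operation. A 2-semilattice operation is a binary commutative idempotent operation $s$ satisfying $s(x,s(x,y))=s(x,y)$. An operation preserves $\rho$ if applying it coordinatewise to tuples of $\rho$ gives a tuple of $\rho$. A unary vector-function is a tuple $\Psi=(\psi_1,\dots,\psi_n)$ of maps $\psi_i:A\to A$ acting coordinatewise; it preserves $\rho$ if $\Psi(\rho)\subseteq\rho$. $\rho$ is a key relation if there is $\beta\in A^n\setminus\rho$ (a key tuple) such that every $\alpha\in A^n\setminus\rho$ is mapped to $\beta$ by some unary vector-function preserving $\rho$. $\rho$ is essential if it cannot be written as a conjunction of relations of smaller arities. The pattern of $\rho$: for $i\ne j$, $i\overset{\rho}{\sim}j$ iff there do NOT exist $a_1,\dots,a_n,b_i,b_j\in A$ with $(a_1,\dots,a_n)\notin\rho$ while the tuples obtained by replacing $a_i$ by $b_i$, replacing $a_j$ by $b_j$, and replacing both, all lie in $\rho$; and $i\overset{\rho}{\sim}i$ always. *)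

theory Defs
  imports Main
begin

definition tuples :: "'a set \<Rightarrow> nat \<Rightarrow> 'a list set" where
  "tuples A n = {t. length t = n \<and> set t \<subseteq> A}"

definition semilattice_op :: "'a set \<Rightarrow> ('a \<Rightarrow> 'a \<Rightarrow> 'a) \<Rightarrow> bool" where
  "semilattice_op A s \<longleftrightarrow>
     (\<forall>x\<in>A. \<forall>y\<in>A. s x y \<in> A) \<and>
     (\<forall>x\<in>A. \<forall>y\<in>A. \<forall>z\<in>A. s x (s y z) = s (s x y) z) \<and>
     (\<forall>x\<in>A. \<forall>y\<in>A. s x y = s y x) \<and>
     (\<forall>x\<in>A. s x x = x)"

definition two_semilattice_op :: "'a set \<Rightarrow> ('a \<Rightarrow> 'a \<Rightarrow> 'a) \<Rightarrow> bool" where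
  "two_semilattice_op A s \<longleftrightarrow>
     (\<forall>x\<in>A. \<forall>y\<in>A. s x y \<in> A) \<and>
     (\<forall>x\<in>A. \<forall>y\<in>A. s x y = s y x) \<and>
     (\<forall>x\<in>A. s x x = x) \<and>
     (\<forall>x\<in>A. \<forall>y\<in>A. s x (s x y) = s x y)"

definition preserves2 :: "('a \<Rightarrow> 'a \<Rightarrow> 'a) \<Rightarrow> 'a list set \<Rightarrow> bool" where
  "preserves2 s \<rho> \<longleftrightarrow> (\<forall>t\<in>\<rho>. \<forall>u\<in>\<rho>. map2 s t u \<in> \<rho>)"

definition apply_vf :: "(nat \<Rightarrow> 'a \<Rightarrow> 'a) \<Rightarrow> 'a list \<Rightarrow> 'a list" where
  "apply_vf \<Psi> t = map (\<lambda>i. \<Psi> i (t ! i)) [0..<length t]"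

definition key_relation :: "'a set \<Rightarrow> nat \<Rightarrow> 'a list set \<Rightarrow> bool" where
  "key_relation A n \<rho> \<longleftrightarrow>
     (\<exists>\<beta>\<in>tuples A n - \<rho>. \<forall>\<alpha>\<in>tuples A n - \<rho>.
        \<exists>\<Psi>. (\<forall>i<n. \<forall>x\<in>A. \<Psi> i x \<in> A) \<and>
             (\<forall>t\<in>\<rho>. apply_vf \<Psi> t \<in> \<rho>) \<and>
             apply_vf \<Psi> \<alpha> = \<beta>)"

text \<open>rho is essential: it is not a (finite) conjunction of relations of smaller arities,
  where each conjunct is a relation sigma of arity length v < n applied to the variables
  x_{v!0}, ..., x_{v!(length v - 1)} (repetitions allowed).\<close>
definition essential :: "'a set \<Rightarrow> nat \<Rightarrow> 'a list set \<Rightarrow> bool" where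
  "essential A n \<rho> \<longleftrightarrow>
     \<not> (\<exists>S :: (nat list \<times> 'a list set) set. finite S \<and>
          (\<forall>(v, \<sigma>)\<in>S. length v < n \<and> set v \<subseteq> {..<n}) \<and>
          \<rho> = {t \<in> tuples A n. \<forall>(v, \<sigma>)\<in>S. map ((!) t) v \<in> \<sigma>})"

definition pattern :: "'a set \<Rightarrow> nat \<Rightarrow> 'a list set \<Rightarrow> nat \<Rightarrow> nat \<Rightarrow> bool" where
  "pattern A n \<rho> i j \<longleftrightarrow> i = j \<or>
     \<not> (\<exists>a\<in>tuples A n. \<exists>bi\<in>A. \<exists>bj\<in>A. a \<notin> \<rho> \<and>
          a[i := bi] \<in> \<rho> \<and> a[j := bj] \<in> \<rho> \<and> a[i := bi, j := bj] \<in> \<rho>)"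

end

theory Submission
  imports Defs
begin

text \<open>Call a tuple outside \<open>\<rho>\<close> critical if each of its coordinates can be changed so that
  the result lies in \<open>\<rho>\<close>. Essentiality yields a critical tuple (otherwise \<open>\<rho>\<close> is the
  conjunction of its projections forgetting one coordinate), and the key tuple \<open>\<beta>\<close> inherits
  criticality along the vector-function mapping that tuple to \<open>\<beta>\<close>.

  Now let a 2-semilattice operation \<open>s\<close> preserve \<open>\<rho>\<close>. Coordinatewise products of
  one-coordinate repairs of a tuple fill squares, and the absorption law
  \<open>s x (s x y) = s x y\<close> makes them close up: if \<open>i \<sim> k\<close> and \<open>q\<close> repairs coordinate
  \<open>j\<close>, then so does \<open>s (\<beta>\<^sub>j) q\<close>. For two disjoint pattern edges this fills a square
  around \<open>\<beta>\<close> itself, forcing \<open>\<beta> \<in> \<rho>\<close>. For a fork \<open>i \<sim> j\<close>, \<open>i \<sim> k\<close>, the non-tuple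
  \<open>\<beta>[i := u, j := v]\<close> is pulled back to \<open>\<beta>\<close> by a vector-function; the images of the repairs
  produce a further non-tuple all of whose relevant squares close. So the pattern has at most
  one edge.\<close>

lemma tuples_length: "t \<in> tuples A n \<Longrightarrow> length t = n"
  by (simp add: tuples_def)

lemma tuples_nth: "t \<in> tuples A n \<Longrightarrow> m < n \<Longrightarrow> t ! m \<in> A"
  by (auto simp: tuples_def)

lemma tuples_update: "t \<in> tuples A n \<Longrightarrow> x \<in> A \<Longrightarrow> t[i := x] \<in> tuples A n"
  by (auto simp: tuples_def dest: subsetD[OF set_update_subset_insert])

lemma apply_vf_update: "apply_vf \<Psi> (t[m := x]) = (apply_vf \<Psi> t)[m := \<Psi> m x]"
  by (cases "m < length t") (auto intro!: nth_equalityI simp: apply_vf_def nth_list_update)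

lemma semilattice_op_imp_two_semilattice_op: "semilattice_op A s \<Longrightarrow> two_semilattice_op A s"
  unfolding semilattice_op_def two_semilattice_op_def by metis

lemma pattern_refl: "pattern A n \<rho> i i"
  by (simp add: pattern_def)

lemma pattern_sym: "pattern A n \<rho> i j \<Longrightarrow> pattern A n \<rho> j i"
  unfolding pattern_def by (metis list_update_swap)

lemma pattern_square_closed:
  assumes "pattern A n \<rho> i j" "i \<noteq> j" "a \<in> tuples A n" "x \<in> A" "y \<in> A"
    and "a[i := x] \<in> \<rho>" "a[j := y] \<in> \<rho>" "a[i := x, j := y] \<in> \<rho>"
  shows "a \<in> \<rho>"
  using assms unfolding pattern_def by blast

definition critical_tuple :: "'a set \<Rightarrow> nat \<Rightarrow> 'a list set \<Rightarrow> 'a list \<Rightarrow> bool" where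
  "critical_tuple A n \<rho> a \<longleftrightarrow> a \<in> tuples A n \<and> a \<notin> \<rho> \<and> (\<forall>m<n. \<exists>c\<in>A. a[m := c] \<in> \<rho>)"

lemma critical_tuple_repair:
  assumes "critical_tuple A n \<rho> b"
  obtains r where "\<And>m. m < n \<Longrightarrow> r m \<in> A" and "\<And>m. m < n \<Longrightarrow> b[m := r m] \<in> \<rho>"
  using assms unfolding critical_tuple_def by metis

definition key_tuple :: "'a set \<Rightarrow> nat \<Rightarrow> 'a list set \<Rightarrow> 'a list \<Rightarrow> bool" where
  "key_tuple A n \<rho> \<beta> \<longleftrightarrow> \<beta> \<in> tuples A n - \<rho> \<and>
     (\<forall>\<alpha>\<in>tuples A n - \<rho>. \<exists>\<Psi>. (\<forall>i<n. \<forall>x\<in>A. \<Psi> i x \<in> A) \<and>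
        (\<forall>t\<in>\<rho>. apply_vf \<Psi> t \<in> \<rho>) \<and> apply_vf \<Psi> \<alpha> = \<beta>)"

lemma key_relation_iff_key_tuple: "key_relation A n \<rho> \<longleftrightarrow> (\<exists>\<beta>. key_tuple A n \<rho> \<beta>)"
  by (auto simp: key_relation_def key_tuple_def)

lemma key_tupleE:
  assumes "key_tuple A n \<rho> \<beta>" "\<alpha> \<in> tuples A n" "\<alpha> \<notin> \<rho>"
  obtains \<Psi> where "\<And>i x. i < n \<Longrightarrow> x \<in> A \<Longrightarrow> \<Psi> i x \<in> A"
    and "\<And>t. t \<in> \<rho> \<Longrightarrow> apply_vf \<Psi> t \<in> \<rho>" and "apply_vf \<Psi> \<alpha> = \<beta>"
  using assms unfolding key_tuple_def by blast

lemma key_tuple_critical: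
  assumes key: "key_tuple A n \<rho> \<beta>" and crit: "critical_tuple A n \<rho> \<alpha>"
  shows "critical_tuple A n \<rho> \<beta>"
proof -
  obtain \<Psi> where \<Psi>A: "\<And>i x. i < n \<Longrightarrow> x \<in> A \<Longrightarrow> \<Psi> i x \<in> A"
    and \<Psi>\<rho>: "\<And>t. t \<in> \<rho> \<Longrightarrow> apply_vf \<Psi> t \<in> \<rho>" and \<Psi>\<alpha>: "apply_vf \<Psi> \<alpha> = \<beta>"
    using key crit by (elim key_tupleE) (auto simp: critical_tuple_def)
  have "\<exists>c\<in>A. \<beta>[m := c] \<in> \<rho>" if "m < n" for m
  proof -
    obtain c where "c \<in> A" "\<alpha>[m := c] \<in> \<rho>" using crit \<open>m < n\<close> by (auto simp: critical_tuple_def)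
    then have "\<beta>[m := \<Psi> m c] \<in> \<rho>" using \<Psi>\<rho> by (metis \<Psi>\<alpha> apply_vf_update)
    then show ?thesis using \<Psi>A \<open>c \<in> A\<close> \<open>m < n\<close> by blast
  qed
  then show ?thesis using key by (auto simp: critical_tuple_def key_tuple_def)
qed

lemma update_eq_if_agree_except:
  assumes "length t' = length t" and "\<And>p. p < length t \<Longrightarrow> p \<noteq> m \<Longrightarrow> t ! p = t' ! p"
  shows "t[m := t' ! m] = t'"
  using assms by (cases "m < length t") (auto intro!: nth_equalityI simp: nth_list_update)

lemma essential_has_critical_tuple:
  assumes ess: "essential A n \<rho>" and sub: "\<rho> \<subseteq> tuples A n"
  shows "\<exists>a. critical_tuple A n \<rho> a"
proof (rule ccontr)
  assume no_crit: "\<not> ?thesis"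
  define others where "others m = filter (\<lambda>p. p \<noteq> m) [0..<n]" for m
  define S where "S = (\<lambda>m. (others m, (\<lambda>t. map ((!) t) (others m)) ` \<rho>)) ` {..<n}"
  have arity: "\<forall>(v, \<sigma>)\<in>S. length v < n \<and> set v \<subseteq> {..<n}"
    using length_filter_less[of _ "[0..<n]" "\<lambda>p. p \<noteq> _"] by (auto simp: S_def others_def)
  have "t \<in> \<rho>" if t: "t \<in> tuples A n" and proj: "\<forall>(v, \<sigma>)\<in>S. map ((!) t) v \<in> \<sigma>" for t
  proof (rule ccontr)
    assume "t \<notin> \<rho>"
    then obtain m where m: "m < n" and stuck: "\<forall>c\<in>A. t[m := c] \<notin> \<rho>"
      using no_crit t by (auto simp: critical_tuple_def)
    have "map ((!) t) (others m) \<in> (\<lambda>t. map ((!) t) (others m)) ` \<rho>"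
      using proj m by (auto simp: S_def)
    then obtain t' where t': "t' \<in> \<rho>" and agree: "map ((!) t) (others m) = map ((!) t') (others m)"
      by blast
    have "t[m := t' ! m] = t'"
      by (rule update_eq_if_agree_except)
        (use t t' sub agree in \<open>auto simp: others_def tuples_length dest!: map_eq_conv[THEN iffD1]\<close>)
    moreover have "t' ! m \<in> A" using t' sub m tuples_nth by blast
    ultimately show False using stuck t' by metis
  qed
  then have "\<rho> = {t \<in> tuples A n. \<forall>(v, \<sigma>)\<in>S. map ((!) t) v \<in> \<sigma>}"
    using sub by (auto simp: S_def)
  moreover have "finite S" by (simp add: S_def)
  ultimately show False using ess arity unfolding essential_def by blast
qed

lemma key_tuple_square_images:
  assumes key: "key_tuple A n \<rho> \<beta>" and dist: "distinct [i, j, k]" "i < n" "j < n" "k < n"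
    and "u \<in> A" "v \<in> A" "w \<in> A" and "\<beta>[i := u, j := v] \<notin> \<rho>"
    and "\<beta>[i := u] \<in> \<rho>" "\<beta>[j := v] \<in> \<rho>" "\<beta>[k := w] \<in> \<rho>"
  obtains c q w' where "c \<in> A" "q \<in> A" "w' \<in> A"
    and "\<beta>[i := c] \<in> \<rho>" "\<beta>[j := q] \<in> \<rho>" "\<beta>[i := c, j := q, k := w'] \<in> \<rho>"
proof -
  let ?\<theta> = "\<beta>[i := u, j := v]"
  have \<beta>: "\<beta> \<in> tuples A n" using key by (simp add: key_tuple_def)
  have len: "length \<beta> = n" using \<beta> tuples_length by blast
  obtain \<Psi> where \<Psi>A: "\<And>i x. i < n \<Longrightarrow> x \<in> A \<Longrightarrow> \<Psi> i x \<in> A"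
    and \<Psi>\<rho>: "\<And>t. t \<in> \<rho> \<Longrightarrow> apply_vf \<Psi> t \<in> \<rho>" and \<Psi>\<theta>: "apply_vf \<Psi> ?\<theta> = \<beta>"
    using key_tupleE[OF key] \<beta> assms by (metis tuples_update)
  have "\<beta>[j := v] = ?\<theta>[i := \<beta> ! i]" "\<beta>[i := u] = ?\<theta>[j := \<beta> ! j]"
    "\<beta>[k := w] = ?\<theta>[i := \<beta> ! i, j := \<beta> ! j, k := w]"
    using dist len by (auto intro!: nth_equalityI simp: nth_list_update)
  then have "\<beta>[i := \<Psi> i (\<beta> ! i)] \<in> \<rho>" "\<beta>[j := \<Psi> j (\<beta> ! j)] \<in> \<rho>"
    "\<beta>[i := \<Psi> i (\<beta> ! i), j := \<Psi> j (\<beta> ! j), k := \<Psi> k w] \<in> \<rho>"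
    using \<Psi>\<rho> assms by (metis \<Psi>\<theta> apply_vf_update)+
  moreover have "\<Psi> i (\<beta> ! i) \<in> A" "\<Psi> j (\<beta> ! j) \<in> A" "\<Psi> k w \<in> A"
    using \<Psi>A \<beta> dist \<open>w \<in> A\<close> tuples_nth by blast+
  ultimately show thesis using that by blast
qed

locale two_semilattice_invariant =
  fixes A :: "'a set" and n :: nat and \<rho> :: "'a list set" and s :: "'a \<Rightarrow> 'a \<Rightarrow> 'a"
  assumes two_semilattice: "two_semilattice_op A s"
    and preserves: "preserves2 s \<rho>"
    and rel_tuples: "\<rho> \<subseteq> tuples A n"
begin

lemma closed: "x \<in> A \<Longrightarrow> y \<in> A \<Longrightarrow> s x y \<in> A"
  and comm: "x \<in> A \<Longrightarrow> y \<in> A \<Longrightarrow> s x y = s y x"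
  and idem: "x \<in> A \<Longrightarrow> s x x = x"
  and absorb: "x \<in> A \<Longrightarrow> y \<in> A \<Longrightarrow> s x (s x y) = s x y"
  using two_semilattice by (auto simp: two_semilattice_op_def)

lemma absorb_right: "x \<in> A \<Longrightarrow> y \<in> A \<Longrightarrow> s (s x y) y = s x y"
  by (metis absorb closed comm)

lemma map2_memI:
  assumes "t \<in> \<rho>" "u \<in> \<rho>" "length r = n" "\<And>m. m < n \<Longrightarrow> r ! m = s (t ! m) (u ! m)"
  shows "r \<in> \<rho>"
proof -
  have "length t = n" "length u = n"
    using assms rel_tuples tuples_length by blast+
  then have "map2 s t u = r"
    using assms by (auto intro!: nth_equalityI)
  then show ?thesis using preserves assms by (auto simp: preserves2_def)
qed

lemma pattern_repair_join:
  assumes pik: "pattern A n \<rho> i k" and dist: "distinct [i, j, k]" "i < n" "j < n" "k < n"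
    and b: "b \<in> tuples A n" and "u \<in> A" "w \<in> A" "q \<in> A"
    and bi: "b[i := u] \<in> \<rho>" and bk: "b[k := w] \<in> \<rho>" and bj: "b[j := q] \<in> \<rho>"
  shows "b[j := s (b ! j) q] \<in> \<rho>"
proof -
  let ?g = "b[j := s (b ! j) q]"
  have bA: "\<And>m. m < n \<Longrightarrow> b ! m \<in> A" using b tuples_nth by blast
  have len: "length b = n" using b tuples_length by blast
  have gi: "?g[i := s u (b ! i)] \<in> \<rho>"
    by (rule map2_memI[OF bi bj]) (use dist len bA \<open>u \<in> A\<close> in \<open>auto simp: nth_list_update idem comm\<close>)
  have gk: "?g[k := s (b ! k) w] \<in> \<rho>"
    by (rule map2_memI[OF bj bk]) (use dist len bA \<open>q \<in> A\<close> in \<open>auto simp: nth_list_update idem comm\<close>)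
  have gik: "?g[i := s u (b ! i), k := s (b ! k) w] \<in> \<rho>"
    by (rule map2_memI[OF gi gk])
      (use dist len bA assms in \<open>auto simp: nth_list_update idem closed absorb absorb_right\<close>)
  show ?thesis
    by (rule pattern_square_closed[OF pik _ _ _ _ gi gk gik])
      (use dist bA assms in \<open>auto intro: tuples_update closed\<close>)
qed

lemma pattern_fork_closed:
  assumes pij: "pattern A n \<rho> i j" and pik: "pattern A n \<rho> i k"
    and dist: "distinct [i, j, k]" "i < n" "j < n" "k < n"
    and a: "a \<in> tuples A n" and "x \<in> A" "y \<in> A" "z \<in> A"
    and ai: "a[i := x] \<in> \<rho>" and ai': "a[i := s (a ! i) x] \<in> \<rho>"
    and aj: "a[j := y] \<in> \<rho>" and ak: "a[k := z] \<in> \<rho>"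
  shows "a \<in> \<rho>"
proof -
  have aA: "\<And>m. m < n \<Longrightarrow> a ! m \<in> A" using a tuples_nth by blast
  have len: "length a = n" using a tuples_length by blast
  have aj': "a[j := s (a ! j) y] \<in> \<rho>"
    by (rule pattern_repair_join[OF pik _ _ _ _ a _ _ _ ai ak aj]) (use dist assms in auto)
  have aij: "a[i := s (a ! i) x, j := s (a ! j) y] \<in> \<rho>"
    by (rule map2_memI[OF ai aj]) (use dist len aA assms in \<open>auto simp: nth_list_update idem comm\<close>)
  show ?thesis
    by (rule pattern_square_closed[OF pij _ a _ _ ai' aj' aij]) (use dist aA assms in \<open>auto intro: closed\<close>)
qed

lemma pattern_no_disjoint_edges:
  assumes pij: "pattern A n \<rho> i j" and pkl: "pattern A n \<rho> k l"
    and dist: "distinct [i, j, k, l]" "i < n" "j < n" "k < n" "l < n"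
    and crit: "critical_tuple A n \<rho> b"
  shows False
proof -
  obtain r where rA: "\<And>m. m < n \<Longrightarrow> r m \<in> A" and r\<rho>: "\<And>m. m < n \<Longrightarrow> b[m := r m] \<in> \<rho>"
    using critical_tuple_repair[OF crit] by blast
  have b: "b \<in> tuples A n" using crit by (simp add: critical_tuple_def)
  have bA: "\<And>m. m < n \<Longrightarrow> b ! m \<in> A" using b tuples_nth by blast
  have len: "length b = n" using b tuples_length by blast
  have bk: "b[k := s (b ! k) (r k)] \<in> \<rho>" and bl: "b[l := s (b ! l) (r l)] \<in> \<rho>"
    by (rule pattern_repair_join[OF pij _ _ _ _ b _ _ _ r\<rho> r\<rho> r\<rho>]; use dist rA in auto)+
  have bkl: "b[k := s (b ! k) (r k), l := s (b ! l) (r l)] \<in> \<rho>"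
    by (rule map2_memI[OF r\<rho>[of k] r\<rho>[of l]])
      (use dist len bA rA in \<open>auto simp: nth_list_update idem comm\<close>)
  have "b \<in> \<rho>"
    by (rule pattern_square_closed[OF pkl _ b _ _ bk bl bkl]) (use dist bA rA in \<open>auto intro: closed\<close>)
  then show False using crit by (simp add: critical_tuple_def)
qed

lemma pattern_no_fork:
  assumes pij: "pattern A n \<rho> i j" and pik: "pattern A n \<rho> i k"
    and dist: "distinct [i, j, k]" "i < n" "j < n" "k < n"
    and key: "key_tuple A n \<rho> b" and crit: "critical_tuple A n \<rho> b"
  shows False
proof -
  obtain r where rA: "\<And>m. m < n \<Longrightarrow> r m \<in> A" and r\<rho>: "\<And>m. m < n \<Longrightarrow> b[m := r m] \<in> \<rho>"
    using critical_tuple_repair[OF crit] by blast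
  have b: "b \<in> tuples A n" and b\<rho>: "b \<notin> \<rho>" using crit by (auto simp: critical_tuple_def)
  have bA: "\<And>m. m < n \<Longrightarrow> b ! m \<in> A" using b tuples_nth by blast
  have len: "length b = n" using b tuples_length by blast
  have "b[i := r i, j := r j] \<notin> \<rho>"
    using pattern_square_closed[OF pij _ b] dist rA r\<rho> b\<rho> by auto
  then obtain c q w where "c \<in> A" "q \<in> A" "w \<in> A" and bi: "b[i := c] \<in> \<rho>"
    and bj: "b[j := q] \<in> \<rho>" and bijk: "b[i := c, j := q, k := w] \<in> \<rho>"
    using key_tuple_square_images[OF key dist rA rA rA _ r\<rho> r\<rho> r\<rho>] dist by blast
  let ?q = "s (b ! j) q"
  have bj': "b[j := ?q] \<in> \<rho>"
    by (rule pattern_repair_join[OF pik _ _ _ _ b _ _ _ r\<rho> r\<rho> bj]) (use dist rA \<open>q \<in> A\<close> in auto)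
  let ?\<alpha> = "b[i := c, j := ?q]"
  have "?\<alpha> \<notin> \<rho>"
    using pattern_square_closed[OF pij _ b _ _ bi bj'] dist b\<rho> \<open>c \<in> A\<close> \<open>q \<in> A\<close> bA closed by auto
  moreover have "?\<alpha> \<in> \<rho>"
  proof (rule pattern_fork_closed[OF pij pik dist])
    have "?\<alpha>[i := b ! i] = b[j := ?q]" "?\<alpha>[j := b ! j] = b[i := c]"
      using dist len by (auto intro!: nth_equalityI simp: nth_list_update)
    then show "?\<alpha>[i := b ! i] \<in> \<rho>" "?\<alpha>[j := b ! j] \<in> \<rho>"
      using bi bj' by simp_all
    show "?\<alpha>[i := s (?\<alpha> ! i) (b ! i)] \<in> \<rho>"
      by (rule map2_memI[OF bi bj]) (use dist len bA in \<open>auto simp: nth_list_update idem\<close>)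
    show "?\<alpha>[k := s w (b ! k)] \<in> \<rho>"
      by (rule map2_memI[OF bijk bi])
        (use dist len bA \<open>c \<in> A\<close> \<open>q \<in> A\<close> in \<open>auto simp: nth_list_update idem comm\<close>)
  qed (use b bA dist \<open>c \<in> A\<close> \<open>q \<in> A\<close> \<open>w \<in> A\<close> in \<open>auto intro: tuples_update closed\<close>)
  ultimately show False by contradiction
qed

lemma pattern_edges_eq:
  assumes key: "key_tuple A n \<rho> b" and crit: "critical_tuple A n \<rho> b"
    and "i < n" "j < n" "k < n" "l < n" "i \<noteq> j" "k \<noteq> l"
    and pij: "pattern A n \<rho> i j" and pkl: "pattern A n \<rho> k l"
  shows "{i, j} = {k, l}"
proof (rule ccontr)
  assume ne: "{i, j} \<noteq> {k, l}"
  note fork = pattern_no_fork[OF _ _ _ _ _ _ key crit]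
  have pji: "pattern A n \<rho> j i" and plk: "pattern A n \<rho> l k"
    using pij pkl by (auto intro: pattern_sym)
  consider "i = k" | "i = l" | "j = k" | "j = l" | "distinct [i, j, k, l]"
    using assms by auto
  then show False
  proof cases
    case 1 then show ?thesis using fork[OF pij, of l] pkl ne assms by auto
  next
    case 2 then show ?thesis using fork[OF pij, of k] plk ne assms by auto
  next
    case 3 then show ?thesis using fork[OF pji, of l] pkl ne assms by auto
  next
    case 4 then show ?thesis using fork[OF pji, of k] plk ne assms by auto
  next
    case 5 then show ?thesis using pattern_no_disjoint_edges[OF pij pkl _ _ _ _ _ crit] assms by blast
  qed
qed

end

lemma single_edge_if_edges_eq:
  fixes P :: "nat \<Rightarrow> nat \<Rightarrow> bool"
  assumes refl: "\<And>i. P i i" and sym: "\<And>i j. P i j \<Longrightarrow> P j i"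
    and edges_eq: "\<And>i j k l. i < n \<Longrightarrow> j < n \<Longrightarrow> k < n \<Longrightarrow> l < n \<Longrightarrow> i \<noteq> j \<Longrightarrow> k \<noteq> l \<Longrightarrow>
      P i j \<Longrightarrow> P k l \<Longrightarrow> {i, j} = {k, l}"
  shows "(\<forall>i<n. \<forall>j<n. P i j \<longleftrightarrow> i = j) \<or>
    (\<exists>k<n. \<exists>l<n. k \<noteq> l \<and> (\<forall>i<n. \<forall>j<n. P i j \<longleftrightarrow> (i = j \<or> {i, j} = {k, l})))"
proof (cases "\<exists>k<n. \<exists>l<n. k \<noteq> l \<and> P k l")
  case True
  then obtain k l where kl: "k < n" "l < n" "k \<noteq> l" "P k l" by blast
  have "P i j \<longleftrightarrow> (i = j \<or> {i, j} = {k, l})" if "i < n" "j < n" for i j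
    using edges_eq[OF that kl(1,2) _ kl(3) _ kl(4)] refl sym kl(4)
    by (auto simp: doubleton_eq_iff)
  then show ?thesis using kl by blast
next
  case False
  then show ?thesis using refl by blast
qed

theorem mainTheorem10:
  fixes A :: "'a set" and n :: nat and \<rho> :: "'a list set" and s :: "'a \<Rightarrow> 'a \<Rightarrow> 'a"
  assumes "finite A"
    and "n \<ge> 3"
    and "\<rho> \<subseteq> tuples A n"
    and "essential A n \<rho>"
    and "key_relation A n \<rho>"
    and "semilattice_op A s \<or> two_semilattice_op A s"
    and "preserves2 s \<rho>"
  shows "(\<forall>i<n. \<forall>j<n. pattern A n \<rho> i j \<longleftrightarrow> i = j) \<or>
         (\<exists>k<n. \<exists>l<n. k \<noteq> l \<and>
            (\<forall>i<n. \<forall>j<n. pattern A n \<rho> i j \<longleftrightarrow> (i = j \<or> {i, j} = {k, l})))"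
proof -
  obtain b where key: "key_tuple A n \<rho> b"
    using assms(5) key_relation_iff_key_tuple by blast
  obtain a where "critical_tuple A n \<rho> a"
    using essential_has_critical_tuple[OF assms(4,3)] by blast
  with key have crit: "critical_tuple A n \<rho> b" by (rule key_tuple_critical)
  have "two_semilattice_op A s"
    using assms(6) semilattice_op_imp_two_semilattice_op by blast
  then interpret two_semilattice_invariant A n \<rho> s
    using assms(3,7) by unfold_locales
  show ?thesis
    by (rule single_edge_if_edges_eq[OF pattern_refl pattern_sym pattern_edges_eq[OF key crit]])
qed

end
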